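(* If $u$ is a word such that the attribute $(x_i,y_i)$ of every position $i$ satisfies $x_i + y_i \leq k+1$, then $u$ has minimal length within its $\sim_k$-class.
   Context: $A$ is a finite alphabet and $k\in\mathbb{N}$. Simon's congruence $u\sim_k v$ holds iff $u$ and $v$ have the same (scattered) subwords of length at most $k$. An $\mathsf{X}$-ranker is a nonempty word over $\{\mathsf{X}_a : a\in A\}$ ("go to the next $a$-position", starting with the first $a$-position) and a $\mathsf{Y}$-ranker a nonempty word over $\{\mathsf{Y}_a : a\in A\}$ ("go to the previous $a$-position", starting with the last $a$-position). The attribute of position $i$ is $(x_i,y_i)$, where $x_i$ (resp. $y_i$) is the length of a shortest $\mathsf{X}$-ranker (resp. $\mathsf{Y}$-ranker) reaching $i$. *)

theory Defs
  imports Main "HOL-Library.Sublist"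
begin

text \<open>Positions of a word u are 0, ..., length u - 1.\<close>

definition simon_cong :: "nat \<Rightarrow> 'a list \<Rightarrow> 'a list \<Rightarrow> bool" where
  "simon_cong k u v \<longleftrightarrow> (\<forall>w. length w \<le> k \<longrightarrow> (subseq w u \<longleftrightarrow> subseq w v))"

definition next_pos :: "'a list \<Rightarrow> nat \<Rightarrow> 'a \<Rightarrow> nat option" where
  "next_pos u s a = (if \<exists>j. s \<le> j \<and> j < length u \<and> u ! j = a
     then Some (LEAST j. s \<le> j \<and> j < length u \<and> u ! j = a) else None)"

definition prev_pos :: "'a list \<Rightarrow> nat \<Rightarrow> 'a \<Rightarrow> nat option" where
  "prev_pos u s a = (if \<exists>j. j < s \<and> j < length u \<and> u ! j = a
     then Some (GREATEST j. j < s \<and> j < length u \<and> u ! j = a) else None)"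

text \<open>Run of an X-ranker X_{a1}...X_{an} (given as list of letters a1..an),
  searching from position s: X_{a1} goes to the first a1-position at or after s,
  each further letter moves to the next occurrence strictly after the current position.\<close>
fun xrun :: "'a list \<Rightarrow> nat \<Rightarrow> 'a list \<Rightarrow> nat option" where
  "xrun u s [] = None"
| "xrun u s (a # r) = (case next_pos u s a of None \<Rightarrow> None
     | Some j \<Rightarrow> (if r = [] then Some j else xrun u (Suc j) r))"

fun yrun :: "'a list \<Rightarrow> nat \<Rightarrow> 'a list \<Rightarrow> nat option" where
  "yrun u s [] = None"
| "yrun u s (a # r) = (case prev_pos u s a of None \<Rightarrow> None
     | Some j \<Rightarrow> (if r = [] then Some j else yrun u j r))"

definition X_reach :: "'a list \<Rightarrow> 'a list \<Rightarrow> nat option" where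
  "X_reach u r = xrun u 0 r"

definition Y_reach :: "'a list \<Rightarrow> 'a list \<Rightarrow> nat option" where
  "Y_reach u r = yrun u (length u) r"

definition x_attr :: "'a list \<Rightarrow> nat \<Rightarrow> nat" where
  "x_attr u i = (LEAST n. \<exists>r. r \<noteq> [] \<and> length r = n \<and> X_reach u r = Some i)"

definition y_attr :: "'a list \<Rightarrow> nat \<Rightarrow> nat" where
  "y_attr u i = (LEAST n. \<exists>r. r \<noteq> [] \<and> length r = n \<and> Y_reach u r = Some i)"

end

theory Submission
  imports Defs
begin

(* Read as words, a shortest X-ranker P_i and a shortest Y-ranker Q_i of position i are
   subwords of u whose leftmost embedding ends at i, resp. whose rightmost embedding starts
   at i, and |P_i| + |Q_i| <= k + 1.  Let v ~k u and fix a letter a.  Along the a-positions i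
   of u we keep an a-position j <= i such that every prefix of v containing P_j contains at
   least as many a's as u[0..j], and |P_j| + #a(u(j..i]) + |Q_i| <= k + 1.  Then the word
   P_j a^#a(u(j..i]) tl(Q_i) has length <= k and is a subword of u, hence of v, which exhibits
   a prefix of v with at least #a(u[0..i]) letters a.  Passing from an a-position i0 to the
   next one i, either |Q_i| < |Q_i0| pays for the new a, or |P_i| + |Q_i0| <= k + 1 and P_i
   takes over the role of P_j: a prefix of v containing P_i with too few a's would make
   butlast(P_i) Q_i0 a subword of v of length <= k, which is not a subword of u.  At the
   last a-position this gives |u|_a <= |v|_a for every letter a. *)

lemma subseq_rev_iff [simp]: "subseq (rev xs) (rev ys) \<longleftrightarrow> subseq xs ys"
proof -
  have "subseq (rev xs) (rev ys)" if "subseq xs ys" for xs ys :: "'a list"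
    using that by induction (auto intro: subseq_rev_drop_many)
  then show ?thesis by (metis rev_rev_ident)
qed

lemma subseq_Cons_iff_first:
  "a \<notin> set ys \<Longrightarrow> subseq (a # r) (ys @ a # zs) \<longleftrightarrow> subseq r zs"
  by (induction ys) auto

lemma subseq_snoc_iff_last:
  "a \<notin> set zs \<Longrightarrow> subseq (r @ [a]) (ys @ a # zs) \<longleftrightarrow> subseq r ys"
  using subseq_Cons_iff_first[of a "rev zs" "rev r" "rev ys"]
  by (simp flip: subseq_rev_iff[of "r @ [a]"])

lemma subseq_replicate_iff: "subseq (replicate n a) xs \<longleftrightarrow> n \<le> count_list xs a"
proof (induction xs arbitrary: n)
  case Nil
  then show ?case by (cases n) simp_all
next
  case (Cons x xs)
  show ?case
  proof (cases n)
    case (Suc m)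
    then show ?thesis using Cons.IH[of m] Cons.IH[of n] by (cases "x = a") simp_all
  qed simp
qed

lemma subseq_take_mono: "subseq xs (take d ys) \<Longrightarrow> d \<le> e \<Longrightarrow> subseq xs (take e ys)"
  by (metis min.absorb1 take_is_prefix take_take prefix_imp_subseq subseq_order.trans)

lemma count_list_take_mono: "d \<le> e \<Longrightarrow> count_list (take d xs) a \<le> count_list (take e xs) a"
  by (metis count_list_append le_add1 append_take_drop_id min.absorb1 take_take)

lemma count_list_take_le: "count_list (take n xs) a \<le> count_list xs a"
  by (metis append_take_drop_id count_list_append le_add1)

lemma take_Suc_split: "j \<le> l \<Longrightarrow> take (Suc l) u = take (Suc j) u @ drop (Suc j) (take (Suc l) u)"
  by (metis append_take_drop_id min.absorb1 not_less_eq_eq take_take)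

lemma last_occurrence_before:
  assumes "a \<in> set (take i u)"
  obtains i0 where "i0 < i" "i0 < length u" "u!i0 = a"
    "count_list (take i u) a = count_list (take (Suc i0) u) a"
proof -
  obtain ys zs where split: "take i u = ys @ a # zs" "a \<notin> set zs"
    using split_list_last[OF assms] by blast
  let ?i0 = "length ys"
  have "?i0 < length (take i u)" using split by simp
  then have i0: "?i0 < i" "?i0 < length u" by simp_all
  have "take (Suc ?i0) (take i u) = ys @ [a]" using split by simp
  then have prefix: "take (Suc ?i0) u = ys @ [a]" using i0 by (simp add: min_def)
  then have "u!?i0 = a" using i0 by (metis length_append_singleton lessI nth_append_length nth_take)
  moreover have "count_list (take i u) a = count_list (take (Suc ?i0) u) a"
    using split prefix by simp
  ultimately show ?thesis using that i0 by blast
qed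

lemma subseq_Cons_drop_if_count_less:
  assumes "count_list (take d xs) a < count_list (take D xs) a" "subseq r (drop D xs)"
  shows "subseq (a # r) (drop d xs)"
proof -
  have "d < D" using assms(1) count_list_take_mono[of D d xs a] by linarith
  then have "take D xs = take d xs @ drop d (take D xs)"
    by (metis append_take_drop_id less_imp_le_nat min.absorb1 take_take)
  then have "a \<in> set (drop d (take D xs))"
    using assms(1) by (metis count_list_append count_notin add_0_right less_irrefl)
  then obtain ys zs where "drop d (take D xs) = ys @ a # zs" by (meson split_list)
  moreover have "drop d xs = drop d (take D xs) @ drop D xs"
    using append_take_drop_id[of "D - d" "drop d xs"] \<open>d < D\<close> by (simp add: drop_take)
  ultimately show ?thesis using assms(2) by (simp add: subseq_drop_many)
qed

lemma length_le_if_count_list_le: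
  assumes "\<And>a. count_list u a \<le> count_list v a"
  shows "length u \<le> length v"
proof -
  let ?X = "set u \<union> set v"
  have "length u = sum (count_list u) ?X" using sum_count_set[of u ?X] by simp
  also have "\<dots> \<le> sum (count_list v) ?X" using assms by (rule sum_mono)
  also have "\<dots> = length v" using sum_count_set[of v ?X] by simp
  finally show ?thesis .
qed

lemma notin_factor:
  assumes "\<And>t. s \<le> t \<Longrightarrow> t < e \<Longrightarrow> t < length u \<Longrightarrow> u!t \<noteq> a"
  shows "a \<notin> set (drop s (take e u))"
proof
  assume "a \<in> set (drop s (take e u))"
  then obtain t where "t < length (drop s (take e u))" "drop s (take e u) ! t = a"
    by (auto simp: in_set_conv_nth)
  then show False using assms[of "s + t"] by (auto simp: min_def split: if_splits)
qed

lemma factor_split: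
  assumes "s \<le> j" "j < e" "j < length u"
  shows "drop s (take e u) = drop s (take j u) @ u!j # drop (Suc j) (take e u)"
proof -
  have "take e u = take j u @ u!j # drop (Suc j) (take e u)"
    using assms id_take_nth_drop[of j "take e u"] by (simp add: min_def)
  then have "drop s (take e u) = drop s (take j u @ u!j # drop (Suc j) (take e u))" by simp
  then show ?thesis using assms by simp
qed

lemma subseq_Cons_factor_iff:
  assumes "s \<le> j" "j < length u" "u!j = a" "\<forall>t. s \<le> t \<longrightarrow> t < j \<longrightarrow> u!t \<noteq> a"
  shows "subseq (a # r) (drop s (take e u)) \<longleftrightarrow> j < e \<and> subseq r (drop (Suc j) (take e u))"
proof (cases "j < e")
  case True
  have "a \<notin> set (drop s (take j u))" using assms(4) by (intro notin_factor) auto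
  moreover have "drop s (take e u) = drop s (take j u) @ a # drop (Suc j) (take e u)"
    using factor_split[of s j e u] True assms by simp
  ultimately show ?thesis using True by (simp add: subseq_Cons_iff_first)
next
  case False
  have "a \<notin> set (drop s (take e u))" using assms(4) False by (intro notin_factor) auto
  then show ?thesis using False by (auto dest: list_emb_set)
qed

lemma subseq_snoc_factor_iff:
  assumes "j < s" "j < length u" "u!j = a" "\<forall>t. j < t \<longrightarrow> t < s \<longrightarrow> t < length u \<longrightarrow> u!t \<noteq> a"
  shows "subseq (r @ [a]) (drop b (take s u)) \<longleftrightarrow> b \<le> j \<and> subseq r (drop b (take j u))"
proof (cases "b \<le> j")
  case True
  have "a \<notin> set (drop (Suc j) (take s u))" using assms(4) by (intro notin_factor) auto
  moreover have "drop b (take s u) = drop b (take j u) @ a # drop (Suc j) (take s u)"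
    using factor_split[of b j s u] True assms by simp
  ultimately show ?thesis using True by (simp add: subseq_snoc_iff_last)
next
  case False
  have "a \<notin> set (drop b (take s u))" using assms(4) False by (intro notin_factor) auto
  then show ?thesis using False by (auto dest: list_emb_set)
qed

lemma next_pos_SomeD:
  assumes "next_pos u s a = Some j"
  shows "s \<le> j \<and> j < length u \<and> u!j = a \<and> (\<forall>t. s \<le> t \<longrightarrow> t < j \<longrightarrow> u!t \<noteq> a)"
proof -
  let ?Q = "\<lambda>j. s \<le> j \<and> j < length u \<and> u!j = a"
  have ex: "\<exists>j. ?Q j" and j: "j = (LEAST j. ?Q j)"
    using assms unfolding next_pos_def by (auto split: if_splits)
  have "?Q j" using LeastI_ex[OF ex] j by simp
  moreover have "\<not> ?Q t" if "t < j" for t using not_less_Least[of t ?Q] that j by simp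
  ultimately show ?thesis by auto
qed

lemma prev_pos_SomeD:
  assumes "prev_pos u s a = Some j"
  shows "j < s \<and> j < length u \<and> u!j = a \<and> (\<forall>t. j < t \<longrightarrow> t < s \<longrightarrow> t < length u \<longrightarrow> u!t \<noteq> a)"
proof -
  let ?Q = "\<lambda>j. j < s \<and> j < length u \<and> u!j = a"
  have ex: "\<exists>j. ?Q j" and j: "j = (GREATEST j. ?Q j)"
    using assms unfolding prev_pos_def by (auto split: if_splits)
  have "?Q j" using GreatestI_ex_nat[OF ex, of s] j by simp
  moreover have "\<not> ?Q t" if "j < t" for t using Greatest_le_nat[of ?Q t s] that j by auto
  ultimately show ?thesis by auto
qed

lemma next_pos_nth: "s < length u \<Longrightarrow> next_pos u s (u!s) = Some s"
  unfolding next_pos_def by (auto intro!: Least_equality)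

lemma prev_pos_nth: "j < length u \<Longrightarrow> prev_pos u (Suc j) (u!j) = Some j"
  unfolding prev_pos_def by (auto intro!: Greatest_equality)

lemma xrun_SomeD:
  "xrun u s P = Some i \<Longrightarrow> s \<le> i \<and> i < length u \<and> (\<forall>e. subseq P (drop s (take e u)) \<longleftrightarrow> i < e)"
proof (induction u s P rule: xrun.induct)
  case (2 u s a r)
  then obtain j where j: "next_pos u s a = Some j"
    by (auto split: option.splits)
  note first = next_pos_SomeD[OF j]
  note step = subseq_Cons_factor_iff[of s j u a, OF _ _ _ _, simplified first]
  show ?case
  proof (cases "r = []")
    case True
    then show ?thesis using "2.prems" j first step by auto
  next
    case False
    then have "xrun u (Suc j) r = Some i" using "2.prems" j by simp
    then show ?thesis using "2.IH"[OF j False] first step by auto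
  qed
qed simp

lemma yrun_SomeD:
  "yrun u s Q = Some i \<Longrightarrow> i < s \<and> i < length u \<and> (\<forall>b. subseq (rev Q) (drop b (take s u)) \<longleftrightarrow> b \<le> i)"
proof (induction u s Q rule: yrun.induct)
  case (2 u s a r)
  then obtain j where j: "prev_pos u s a = Some j"
    by (auto split: option.splits)
  note last = prev_pos_SomeD[OF j]
  note step = subseq_snoc_factor_iff[of j s u a, OF _ _ _ _, simplified last]
  show ?case
  proof (cases "r = []")
    case True
    then show ?thesis using "2.prems" j last step[of "[]"] by auto
  next
    case False
    then have "yrun u j r = Some i" using "2.prems" j by simp
    then show ?thesis using "2.IH"[OF j False] last step by auto
  qed
qed simp

lemma xrun_factor: "s \<le> i \<Longrightarrow> i < length u \<Longrightarrow> xrun u s (drop s (take (Suc i) u)) = Some i"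
proof (induction "i - s" arbitrary: s)
  case 0
  then have "drop s (take (Suc i) u) = [u!i]" and "s = i"
    by (simp_all add: take_Suc_conv_app_nth)
  then show ?case using next_pos_nth[of i u] 0 by simp
next
  case (Suc n)
  then have "drop s (take (Suc i) u) = u!s # drop (Suc s) (take (Suc i) u)"
    using Cons_nth_drop_Suc[of s "take (Suc i) u"] by simp
  moreover have "drop (Suc s) (take (Suc i) u) \<noteq> []" using Suc by simp
  ultimately show ?case using Suc next_pos_nth[of s u] by simp
qed

lemma yrun_factor: "i < s \<Longrightarrow> s \<le> length u \<Longrightarrow> yrun u s (rev (drop i (take s u))) = Some i"
proof (induction "s - i" arbitrary: s)
  case (Suc n)
  then obtain s' where s: "s = Suc s'" by (cases s) auto
  then have "rev (drop i (take s u)) = u!s' # rev (drop i (take s' u))"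
    using Suc.prems by (simp add: take_Suc_conv_app_nth)
  then show ?case using Suc s prev_pos_nth[of s' u] by (cases "i = s'") auto
qed simp

definition leftmost_end :: "'a list \<Rightarrow> 'a list \<Rightarrow> nat \<Rightarrow> bool" where
  "leftmost_end u P i \<longleftrightarrow> (\<forall>e. subseq P (take e u) \<longleftrightarrow> i < e)"

definition rightmost_start :: "'a list \<Rightarrow> 'a list \<Rightarrow> nat \<Rightarrow> bool" where
  "rightmost_start u Q i \<longleftrightarrow> (\<forall>b. subseq Q (drop b u) \<longleftrightarrow> b \<le> i)"

lemma X_reach_leftmost_end:
  "X_reach u P = Some i \<Longrightarrow> leftmost_end u P i"
  using xrun_SomeD[of u 0 P i] unfolding X_reach_def leftmost_end_def by simp

(* A Y-ranker reads its letters from right to left, hence the reversal. *)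
lemma Y_reach_rightmost_start:
  "Y_reach u Q = Some i \<Longrightarrow> rightmost_start u (rev Q) i"
  using yrun_SomeD[of u "length u" Q i] unfolding Y_reach_def rightmost_start_def by simp

lemma x_attr_witness:
  assumes "i < length u"
  obtains P where "length P = x_attr u i" "leftmost_end u P i"
proof -
  have "X_reach u (take (Suc i) u) = Some i"
    using xrun_factor[of 0 i u] assms unfolding X_reach_def by simp
  then have "\<exists>n r. r \<noteq> [] \<and> length r = n \<and> X_reach u r = Some i"
    using assms by (intro exI[of _ "Suc i"] exI[of _ "take (Suc i) u"]) auto
  from LeastI_ex[OF this] show ?thesis
    using that X_reach_leftmost_end unfolding x_attr_def by blast
qed

lemma y_attr_witness:
  assumes "i < length u"
  obtains Q where "length Q = y_attr u i" "rightmost_start u Q i"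
proof -
  have "Y_reach u (rev (drop i u)) = Some i"
    using yrun_factor[of i "length u" u] assms unfolding Y_reach_def by simp
  then have "\<exists>n r. r \<noteq> [] \<and> length r = n \<and> Y_reach u r = Some i"
    using assms by (intro exI[of _ "length u - i"] exI[of _ "rev (drop i u)"]) simp
  from LeastI_ex[OF this] show ?thesis
    using that Y_reach_rightmost_start unfolding y_attr_def by (metis length_rev)
qed

lemma leftmost_end_snoc:
  assumes "leftmost_end u P i" "i < length u"
  shows "P = butlast P @ [u!i]"
proof -
  have "subseq P (take i u @ [u!i])" "\<not> subseq P (take i u)"
    using assms by (simp_all add: leftmost_end_def flip: take_Suc_conv_app_nth)
  then obtain P1 P2 where "P = P1 @ P2" "subseq P1 (take i u)" "subseq P2 [u!i]"
    by (auto elim: subseq_appendE)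
  moreover from this have "P2 \<noteq> []" using \<open>\<not> subseq P (take i u)\<close> by auto
  ultimately have "P = P1 @ [u!i]" by (cases P2) (auto split: if_splits)
  then show ?thesis by simp
qed

lemma rightmost_start_Cons:
  assumes "rightmost_start u Q i" "i < length u"
  shows "Q = u!i # tl Q" "subseq (tl Q) (drop (Suc i) u)"
proof -
  have "subseq Q (u!i # drop (Suc i) u)" "\<not> subseq Q (drop (Suc i) u)"
    using assms by (simp_all add: rightmost_start_def Cons_nth_drop_Suc)
  then show "Q = u!i # tl Q" "subseq (tl Q) (drop (Suc i) u)"
    by (cases Q; auto split: if_splits)+
qed

lemma leftmost_rightmost_no_crossing:
  assumes "leftmost_end u P i" "rightmost_start u Q i0" "i0 < i" "i < length u" "u!i0 = u!i"
  shows "\<not> subseq (butlast P @ Q) u"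
proof
  assume "subseq (butlast P @ Q) u"
  then obtain z1 z2 where u: "u = z1 @ z2" and "subseq (butlast P) z1" "subseq Q z2"
    by (auto dest: list_emb_appendD)
  then have "subseq Q (drop (length z1) u)" and z1: "z1 = take (length z1) u" by simp_all
  then have "length z1 \<le> i0" using assms(2) unfolding rightmost_start_def by blast
  then have "subseq (butlast P) (take i0 u)"
    using \<open>subseq (butlast P) z1\<close> z1 subseq_take_mono by metis
  then have "subseq (butlast P @ [u!i]) (take i0 u @ [u!i0])"
    using assms(5) by (simp add: list_emb_append_mono)
  then have "subseq P (take (Suc i0) u)"
    using leftmost_end_snoc[OF assms(1,4)] assms(3,4)
    by (simp add: take_Suc_conv_app_nth)
  then show False using assms(1,3) unfolding leftmost_end_def by simp
qed

lemma leftmost_rightmost_embed_between: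
  assumes "leftmost_end u P j" "rightmost_start u Q l" "j \<le> l" "l < length u"
  shows "subseq (P @ replicate (count_list (take (Suc l) u) a - count_list (take (Suc j) u) a) a @ tl Q) u"
proof -
  let ?mid = "drop (Suc j) (take (Suc l) u)"
  have "u = take (Suc j) u @ ?mid @ drop (Suc l) u"
    using take_Suc_split[OF assms(3), of u] by (metis append.assoc append_take_drop_id)
  moreover have "subseq P (take (Suc j) u)" using assms(1) unfolding leftmost_end_def by simp
  moreover have "subseq (replicate (count_list (take (Suc l) u) a - count_list (take (Suc j) u) a) a) ?mid"
    using arg_cong[OF take_Suc_split[OF assms(3), of u], of "\<lambda>w. count_list w a"]
    by (simp add: subseq_replicate_iff)
  moreover have "subseq (tl Q) (drop (Suc l) u)" using rightmost_start_Cons(2)[OF assms(2,4)] .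
  ultimately show ?thesis by (metis list_emb_append_mono)
qed

locale short_witnesses =
  fixes k :: nat and u v :: "'a list" and P Q :: "nat \<Rightarrow> 'a list"
  assumes cong: "simon_cong k u v"
    and leftmost: "i < length u \<Longrightarrow> leftmost_end u (P i) i"
    and rightmost: "i < length u \<Longrightarrow> rightmost_start u (Q i) i"
    and length_bound: "i < length u \<Longrightarrow> length (P i) + length (Q i) \<le> k + 1"
begin

definition count_upto :: "'a \<Rightarrow> nat \<Rightarrow> nat" where
  "count_upto a i = count_list (take (Suc i) u) a"

definition count_forced :: "'a \<Rightarrow> nat \<Rightarrow> bool" where
  "count_forced a j \<longleftrightarrow> (\<forall>c. subseq (P j) (take c v) \<longrightarrow> count_upto a j \<le> count_list (take c v) a)"

definition certified :: "'a \<Rightarrow> nat \<Rightarrow> bool" where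
  "certified a i \<longleftrightarrow> (\<exists>j\<le>i. u!j = a \<and> count_forced a j \<and>
     length (P j) + (count_upto a i - count_upto a j) + length (Q i) \<le> k + 1)"

lemma short_subseq_iff:
  "length w \<le> k \<Longrightarrow> subseq w u \<longleftrightarrow> subseq w v"
  using cong unfolding simon_cong_def by blast

lemma certified_prefix_in_v:
  assumes "certified a i" "i < length u"
  obtains D where "count_upto a i \<le> count_list (take D v) a" "subseq (tl (Q i)) (drop D v)"
proof -
  obtain j where j: "j \<le> i" "count_forced a j"
    and bound: "length (P j) + (count_upto a i - count_upto a j) + length (Q i) \<le> k + 1"
    using assms(1) unfolding certified_def by blast
  let ?W = "P j @ replicate (count_upto a i - count_upto a j) a @ tl (Q i)"
  have "subseq ?W u"
    using leftmost_rightmost_embed_between[OF leftmost rightmost j(1) assms(2)] j(1) assms(2)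
    unfolding count_upto_def by simp
  moreover have "length (Q i) = Suc (length (tl (Q i)))"
    using rightmost_start_Cons(1)[OF rightmost[OF assms(2)] assms(2)] by (metis length_Cons)
  then have "length ?W \<le> k" using bound by simp
  ultimately have "subseq ?W v" using short_subseq_iff by blast
  then obtain w1 w2 w3 where v: "v = w1 @ w2 @ w3" and "subseq (P j) w1"
    and w2: "subseq (replicate (count_upto a i - count_upto a j) a) w2" and w3: "subseq (tl (Q i)) w3"
    by (auto dest!: list_emb_appendD)
  then have "count_upto a j \<le> count_list w1 a"
    using j(2) unfolding count_forced_def by (metis append_eq_conv_conj)
  moreover have "count_upto a i - count_upto a j \<le> count_list w2 a"
    using w2 by (simp add: subseq_replicate_iff)
  moreover have "count_upto a j \<le> count_upto a i"
    using j(1) count_list_take_mono[of "Suc j" "Suc i" u a] unfolding count_upto_def by simp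
  ultimately have "count_upto a i \<le> count_list (take (length (w1 @ w2)) v) a" using v by simp
  moreover have "subseq (tl (Q i)) (drop (length (w1 @ w2)) v)" using v w3 by simp
  ultimately show ?thesis using that by blast
qed

lemma count_upto_le_if_butlast_embeds:
  assumes "i0 < i" "i < length u" "u!i0 = a" "u!i = a" "certified a i0"
    and "length (P i) + length (Q i0) \<le> k + 1" "subseq (butlast (P i)) (take d v)"
  shows "count_upto a i0 \<le> count_list (take d v) a"
proof (rule ccontr)
  assume less: "\<not> count_upto a i0 \<le> count_list (take d v) a"
  have i0: "i0 < length u" using assms(1,2) by simp
  obtain D where "count_upto a i0 \<le> count_list (take D v) a" "subseq (tl (Q i0)) (drop D v)"
    using certified_prefix_in_v[OF assms(5) i0] by auto
  then have "subseq (a # tl (Q i0)) (drop d v)"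
    using less by (intro subseq_Cons_drop_if_count_less) simp_all
  then have "subseq (Q i0) (drop d v)"
    using rightmost_start_Cons(1)[OF rightmost i0] i0 assms(3) by simp
  then have "subseq (butlast (P i) @ Q i0) v"
    using assms(7) list_emb_append_mono by (metis append_take_drop_id)
  moreover have "0 < length (P i)"
    using leftmost_end_snoc[OF leftmost assms(2)] assms(2) by (cases "P i") auto
  then have "length (butlast (P i) @ Q i0) \<le> k"
    using assms(6) unfolding length_append length_butlast by linarith
  ultimately have "subseq (butlast (P i) @ Q i0) u" using short_subseq_iff by blast
  then show False
    using leftmost_rightmost_no_crossing[OF leftmost[OF assms(2)] rightmost[OF i0]] assms by simp
qed

lemma count_forced_step:
  assumes "i0 < i" "i < length u" "u!i0 = a" "u!i = a"
    and "count_upto a i = Suc (count_upto a i0)" "certified a i0"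
    and "length (P i) + length (Q i0) \<le> k + 1"
  shows "count_forced a i"
  unfolding count_forced_def
proof (intro allI impI)
  fix c assume "subseq (P i) (take c v)"
  moreover have "P i = butlast (P i) @ [a]"
    using leftmost_end_snoc[OF leftmost assms(2)] assms(2,4) by simp
  ultimately obtain z1 z2 where c: "take c v = z1 @ z2"
    and "subseq (butlast (P i)) z1" "subseq [a] z2"
    by (metis list_emb_appendD)
  define d where "d = length z1"
  have "take d (take c v) = z1" using c unfolding d_def by simp
  moreover have "d \<le> c"
    using arg_cong[OF c, of length] unfolding d_def by (simp add: min_def split: if_splits)
  ultimately have z1: "z1 = take d v" by (simp add: min_def)
  have "count_list z2 a \<noteq> 0"
    using \<open>subseq [a] z2\<close> by (simp add: subseq_singleton_left count_list_0_iff)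
  then have "Suc (count_list (take d v) a) \<le> count_list (take c v) a"
    using c z1 by simp
  moreover have "count_upto a i0 \<le> count_list (take d v) a"
    using count_upto_le_if_butlast_embeds assms \<open>subseq (butlast (P i)) z1\<close> z1 by blast
  ultimately show "count_upto a i \<le> count_list (take c v) a" using assms(5) by simp
qed

lemma certified_at_occurrence:
  "i < length u \<Longrightarrow> u!i = a \<Longrightarrow> certified a i"
proof (induction i rule: less_induct)
  case (less i)
  show ?case
  proof (cases "a \<in> set (take i u)")
    case False
    then have first: "count_upto a i = 1"
      using less.prems unfolding count_upto_def by (simp add: take_Suc_conv_app_nth)
    have "count_forced a i" unfolding count_forced_def
    proof (intro allI impI)
      fix c assume "subseq (P i) (take c v)"
      moreover have "a \<in> set (P i)"
        using leftmost_end_snoc[OF leftmost less.prems(1)] less.prems by (metis in_set_conv_decomp)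
      ultimately have "a \<in> set (take c v)" by (auto elim: list_emb_set)
      then show "count_upto a i \<le> count_list (take c v) a"
        using first count_list_0_iff[of "take c v" a] by simp
    qed
    then show ?thesis
      unfolding certified_def using less.prems length_bound by (intro exI[of _ i]) auto
  next
    case True
    then obtain i0 where i0: "i0 < i" "i0 < length u" "u!i0 = a"
      "count_list (take i u) a = count_list (take (Suc i0) u) a"
      by (rule last_occurrence_before)
    have step: "count_upto a i = Suc (count_upto a i0)"
      using i0(4) less.prems unfolding count_upto_def by (simp add: take_Suc_conv_app_nth)
    have "certified a i0" using less.IH i0 by blast
    then obtain j where j: "j \<le> i0" "u!j = a" "count_forced a j"
      and bound: "length (P j) + (count_upto a i0 - count_upto a j) + length (Q i0) \<le> k + 1"
      unfolding certified_def by blast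
    show ?thesis
    proof (cases "length (P i) + length (Q i0) \<le> k + 1")
      case True
      then have "count_forced a i"
        using count_forced_step i0 less.prems step \<open>certified a i0\<close> by blast
      then show ?thesis
        unfolding certified_def using less.prems length_bound by (intro exI[of _ i]) auto
    next
      case False
      then have "length (Q i) < length (Q i0)" using length_bound[OF less.prems(1)] by simp
      moreover have "count_upto a j \<le> count_upto a i0"
        using j(1) count_list_take_mono[of "Suc j" "Suc i0" u a] unfolding count_upto_def by simp
      ultimately show ?thesis
        unfolding certified_def using j bound step i0(1) by (intro exI[of _ j]) auto
    qed
  qed
qed

lemma count_list_le: "count_list u a \<le> count_list v a"
proof (cases "a \<in> set u")
  case True
  then obtain l where l: "l < length u" "u!l = a" "count_list u a = count_upto a l"
    using last_occurrence_before[of a "length u" u] unfolding count_upto_def by auto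
  obtain D where "count_upto a l \<le> count_list (take D v) a"
    using certified_prefix_in_v[OF certified_at_occurrence[OF l(1,2)] l(1)] by blast
  then show ?thesis using l(3) count_list_take_le[of D v a] by simp
qed simp

end

theorem theorem8:
  fixes A :: "'a set" and k :: nat and u :: "'a list"
  assumes "finite A" and "u \<in> lists A"
    and "\<forall>i < length u. x_attr u i + y_attr u i \<le> k + 1"
  shows "\<forall>v \<in> lists A. simon_cong k u v \<longrightarrow> length u \<le> length v"
proof (intro ballI impI)
  fix v assume cong: "simon_cong k u v"
  have "\<forall>i. \<exists>P. i < length u \<longrightarrow> length P = x_attr u i \<and> leftmost_end u P i"
    using x_attr_witness by metis
  then obtain P where P: "\<forall>i < length u. length (P i) = x_attr u i \<and> leftmost_end u (P i) i"
    by (metis choice)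
  have "\<forall>i. \<exists>Q. i < length u \<longrightarrow> length Q = y_attr u i \<and> rightmost_start u Q i"
    using y_attr_witness by metis
  then obtain Q where Q: "\<forall>i < length u. length (Q i) = y_attr u i \<and> rightmost_start u (Q i) i"
    by (metis choice)
  interpret short_witnesses k u v P Q
    using cong P Q assms(3) by unfold_locales auto
  show "length u \<le> length v" using count_list_le by (rule length_le_if_count_list_le)
qed

end
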